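(* Let $p,q$ be coprime positive integers with $\frac pq<\frac12$. Then $P_{0,\frac pq}\triangleleft P_{1,\frac pq}$, i.e. $H_2(M_0)>H_2(M_1)$ and $H_2(m_0)>H_2(m_1)$, where $M_r,m_r$ denote the points of absolute maximum and absolute minimum of $P_{r,\frac pq}$.
   Context: $H_2:[0,1]\to[0,1]$ is $H_2(x)=3x$ on $I_0=[0,\frac13]$, $2-3x$ on $I_1=[\frac13,\frac23]$, $3x-2$ on $I_2=[\frac23,1]$. For coprime $p,q$ with $0<\frac pq<\frac12$ and $r\in\{0,1,\dots,q-2p\}$, $\Gamma_{r,\frac pq}$ is the bimodal over-twist pattern whose cyclic permutation $\Pi_{r,\frac pq}$ of $\{1,\dots,q\}$ (action on the points of the cycle labelled $x_1<\dots<x_q$) is: $j\mapsto j+p$ for $1\le j\le r$; $j\mapsto q-j+r+1$ for $r+1\le j\le r+p$; $j\mapsto 2p-j+r+1$ for $r+p+1\le j\le r+2p$; $j\mapsto j-p$ for $r+2p+1\le j\le q$. $P_{r,\frac pq}$ denotes the cycle of $H_2$ exhibiting $\Gamma_{r,\frac pq}$ singled out by the location of its extremal points as follows (the paper asserts it is unique): for $r=0$ and $r=q-2p$ its points $M_r,m_r$ lie in $I_1$, and for $1\le r\le q-2p-1$, $M_r\in I_1$ and $m_r\in I_2$. Here the point of absolute maximum $M_r$ (resp. absolute minimum $m_r$) of a cycle $P$ is the point of $P$ whose image under $H_2$ is the largest (resp. smallest) point of $P$. $P_{r_2,\frac pq}\triangleleft P_{r_1,\frac pq}$ means $H_2(M_{r_2})>H_2(M_{r_1})$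 and $H_2(m_{r_2})>H_2(m_{r_1})$. *)

theory Defs
  imports Complex_Main
begin

definition H2 :: "real \<Rightarrow> real" where
  "H2 x = (if x \<le> 1/3 then 3*x else if x \<le> 2/3 then 2 - 3*x else 3*x - 2)"

definition I1 :: "real set" where "I1 = {1/3..2/3}"
definition I2 :: "real set" where "I2 = {2/3..1}"

definition Pi_ot :: "nat \<Rightarrow> nat \<Rightarrow> nat \<Rightarrow> nat \<Rightarrow> nat" where
  "Pi_ot r p q j =
     (if j \<le> r then j + p
      else if j \<le> r + p then q + r + 1 - j
      else if j \<le> r + 2*p then 2*p + r + 1 - j
      else j - p)"

definition exhibits_ot :: "nat \<Rightarrow> nat \<Rightarrow> nat \<Rightarrow> (nat \<Rightarrow> real) \<Rightarrow> bool" where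
  "exhibits_ot r p q x \<longleftrightarrow>
     (\<forall>i\<in>{1..q}. \<forall>j\<in>{1..q}. i < j \<longrightarrow> x i < x j) \<and>
     (\<forall>j\<in>{1..q}. x j \<in> {0..1} \<and> H2 (x j) = x (Pi_ot r p q j))"

definition abs_max_pt :: "real set \<Rightarrow> real" where
  "abs_max_pt P = (THE y. y \<in> P \<and> H2 y = Max P)"
definition abs_min_pt :: "real set \<Rightarrow> real" where
  "abs_min_pt P = (THE y. y \<in> P \<and> H2 y = Min P)"

definition is_P_ot :: "nat \<Rightarrow> nat \<Rightarrow> nat \<Rightarrow> (nat \<Rightarrow> real) \<Rightarrow> bool" where
  "is_P_ot r p q x \<longleftrightarrow> exhibits_ot r p q x \<and>
     (let P = x ` {1..q} in
       abs_max_pt P \<in> I1 \<and>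
       (if r = 0 \<or> r = q - 2*p then abs_min_pt P \<in> I1 else abs_min_pt P \<in> I2))"

end

theory Submission
  imports Defs "HOL-Number_Theory.Cong"
begin

(* Write x_1 < ... < x_q for P_{0,p/q} and y_1 < ... < y_q for P_{1,p/q}. Reading off the
   permutations, M_0 = x_1, m_0 = x_{2p}, M_1 = y_2 and m_1 = y_{2p+1}; the prescribed
   locations of these points force x_1, ..., x_{2p} and y_2, ..., y_{2p} into I_1, y_1 into I_0,
   and the remaining points to the right of 2/3, except y_q in I_1 when q = 2p+1. As H_2 is
   decreasing on I_1, the claim reduces to x_1 < y_2 together with y_1 < 1/3 <= x_1.
   Pair x_i with y_{i+1} for i <= p, x_{p+1} with y_1 and x_i with y_i otherwise, and orient
   the gap g_i of each pair so that, H_2 having slope +-3 on each branch, g is multiplied by 3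
   along Pi_{0,p/q}, except at i = p+1 and at i = q = 2p+1, where g_i > 0. Hence g_i <= 0
   propagates along the orbit; Pi_{0,p/q} is cyclic because p and q are coprime (it is
   conjugate to the rotation by -p), so g_1 <= 0 would force g_{p+1} <= 0. *)

lemma coprime_rotation_invariant:
  fixes k q u w :: nat
  assumes cop: "coprime k q" and u: "u < q" "Q u"
    and step: "\<And>v. v < q \<Longrightarrow> Q v \<Longrightarrow> Q ((v + k) mod q)" and w: "w < q"
  shows "Q w"
proof -
  have iterate: "Q ((u + n * k) mod q)" for n
  proof (induction n)
    case 0
    then show ?case using u by simp
  next
    case (Suc n)
    have "Q (((u + n * k) mod q + k) mod q)"
      using step[OF _ Suc] u by simp
    then show ?case
      unfolding mod_add_left_eq by (simp add: algebra_simps)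
  qed
  obtain inv where "[k * inv = 1] (mod q)"
    using cong_solve_coprime_nat[OF cop] by auto
  then have "[u + inv * (w + q - u) * k = u + (w + q - u)] (mod q)"
    by (metis cong_add_lcancel_nat cong_scalar_right mult.commute mult_1 mult.assoc)
  also have "u + (w + q - u) = w + q * 1" using u by simp
  also have "[w + q * 1 = w] (mod q)" by (simp add: cong_def)
  finally have "(u + inv * (w + q - u) * k) mod q = w"
    using w by (simp add: cong_def)
  then show ?thesis using iterate by metis
qed

lemma Pi_ot_range: "r + 2 * p \<le> q \<Longrightarrow> j \<in> {1..q} \<Longrightarrow> Pi_ot r p q j \<in> {1..q}"
  by (auto simp: Pi_ot_def)

lemma inj_on_Pi_ot: "r + 2 * p \<le> q \<Longrightarrow> inj_on (Pi_ot r p q) {1..q}"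
  unfolding inj_on_def Pi_ot_def by (auto split: if_splits)

definition reverse_prefix :: "nat \<Rightarrow> nat \<Rightarrow> nat" where
  "reverse_prefix p i = (if i \<le> p then p + 1 - i else i)"

lemma reverse_prefix_reverse_prefix: "1 \<le> i \<Longrightarrow> reverse_prefix p (reverse_prefix p i) = i"
  by (auto simp: reverse_prefix_def)

lemma reverse_prefix_range: "p \<le> q \<Longrightarrow> i \<in> {1..q} \<Longrightarrow> reverse_prefix p i \<in> {1..q}"
  by (auto simp: reverse_prefix_def)

lemma Pi_ot_0_conj_rotation:
  assumes pq: "2 * p \<le> q" and v: "v < q"
  shows "reverse_prefix p (Pi_ot 0 p q (reverse_prefix p (v + 1))) = (v + (q - p)) mod q + 1"
proof (cases "v < p")
  case True
  then have "(v + (q - p)) mod q = v + (q - p)" using pq by simp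
  then show ?thesis using True pq by (auto simp: reverse_prefix_def Pi_ot_def)
next
  case False
  then have "(v + (q - p)) mod q = v - p" using pq v by (simp add: le_mod_geq)
  then show ?thesis using False pq by (auto simp: reverse_prefix_def Pi_ot_def)
qed

lemma Pi_ot_0_invariant_all:
  fixes p q :: nat
  assumes cop: "coprime p q" and pq: "2 * p \<le> q"
    and i: "i \<in> {1..q}" "P i"
    and step: "\<And>j. j \<in> {1..q} \<Longrightarrow> P j \<Longrightarrow> P (Pi_ot 0 p q j)"
    and j: "j \<in> {1..q}"
  shows "P j"
proof -
  let ?flip = "reverse_prefix p"
  have flip_range: "?flip k \<in> {1..q}" if "k \<in> {1..q}" for k
    using reverse_prefix_range[of p q k] pq that by simp
  have flip_shift: "?flip k - 1 + 1 = ?flip k" if "k \<in> {1..q}" for k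
    using flip_range[OF that] by simp
  have "coprime (q - p) q"
    using cop pq by (simp add: coprime_iff_gcd_eq_1 gcd_diff2_nat)
  then have "P (?flip (?flip j - 1 + 1))"
  proof (rule coprime_rotation_invariant[where Q = "\<lambda>v. P (?flip (v + 1))"])
    show "?flip i - 1 < q" "?flip j - 1 < q" using flip_range i j by fastforce+
    show "P (?flip (?flip i - 1 + 1))" using i flip_shift by (simp add: reverse_prefix_reverse_prefix)
    fix v assume v: "v < q" and "P (?flip (v + 1))"
    moreover have "?flip (v + 1) \<in> {1..q}" using v flip_range by simp
    ultimately have "P (Pi_ot 0 p q (?flip (v + 1)))" using step by blast
    moreover have "Pi_ot 0 p q (?flip (v + 1)) \<in> {1..q}"
      using Pi_ot_range[OF _ \<open>?flip (v + 1) \<in> {1..q}\<close>] pq by simp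
    ultimately show "P (?flip ((v + (q - p)) mod q + 1))"
      by (metis Pi_ot_0_conj_rotation[OF pq v] reverse_prefix_reverse_prefix atLeastAtMost_iff)
  qed
  then show ?thesis using j flip_shift by (simp add: reverse_prefix_reverse_prefix)
qed

lemma H2_on_I1: "1/3 \<le> x \<Longrightarrow> x \<le> 2/3 \<Longrightarrow> H2 x = 2 - 3 * x"
  by (simp add: H2_def)

lemma H2_on_I2: "2/3 \<le> x \<Longrightarrow> H2 x = 3 * x - 2"
  by (auto simp: H2_def)

locale overtwist_cycle =
  fixes r p q :: nat and x :: "nat \<Rightarrow> real"
  assumes exhibits: "exhibits_ot r p q x" and fits: "r + 2 * p \<le> q"
begin

lemma strict_mono_on: "strict_mono_on {1..q} x"
  using exhibits by (auto simp: exhibits_ot_def strict_mono_on_def)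

lemma points_less: "1 \<le> i \<Longrightarrow> i < j \<Longrightarrow> j \<le> q \<Longrightarrow> x i < x j"
  using strict_mono_onD[OF strict_mono_on] by simp

lemma points_le: "1 \<le> i \<Longrightarrow> i \<le> j \<Longrightarrow> j \<le> q \<Longrightarrow> x i \<le> x j"
  using points_less by (cases "i = j") (auto intro: less_imp_le)

lemma H2_eq: "1 \<le> j \<Longrightarrow> j \<le> q \<Longrightarrow> H2 (x j) = x (Pi_ot r p q j)"
  using exhibits by (simp add: exhibits_ot_def)

lemma the_H2_preimage:
  assumes j: "j \<in> {1..q}"
  shows "(THE y. y \<in> x ` {1..q} \<and> H2 y = x (Pi_ot r p q j)) = x j"
proof (rule the_equality)
  show "x j \<in> x ` {1..q} \<and> H2 (x j) = x (Pi_ot r p q j)"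
    using j H2_eq by auto
next
  fix y assume "y \<in> x ` {1..q} \<and> H2 y = x (Pi_ot r p q j)"
  then obtain i where i: "i \<in> {1..q}" "y = x i" "x (Pi_ot r p q i) = x (Pi_ot r p q j)"
    using H2_eq by auto
  then have "Pi_ot r p q i = Pi_ot r p q j"
    using strict_mono_on_imp_inj_on[OF strict_mono_on] Pi_ot_range[OF fits] j
    by (auto dest: inj_onD)
  then have "i = j"
    using inj_on_Pi_ot[OF fits] i(1) j by (auto dest: inj_onD)
  then show "y = x j" using i by simp
qed

lemma Max_eq: "1 \<le> q \<Longrightarrow> Max (x ` {1..q}) = x q"
  by (rule Max_eqI) (auto intro: points_le)

lemma Min_eq: "1 \<le> q \<Longrightarrow> Min (x ` {1..q}) = x 1"
  by (rule Min_eqI) (auto intro: points_le)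

lemma abs_max_pt_eq:
  assumes "j \<in> {1..q}" "Pi_ot r p q j = q"
  shows "abs_max_pt (x ` {1..q}) = x j"
  using the_H2_preimage[of j] Max_eq assms by (simp add: abs_max_pt_def)

lemma abs_min_pt_eq:
  assumes "j \<in> {1..q}" "Pi_ot r p q j = 1"
  shows "abs_min_pt (x ` {1..q}) = x j"
  using the_H2_preimage[of j] Min_eq assms by (simp add: abs_min_pt_def)

end

locale P_ot_0 =
  fixes p q :: nat and x :: "nat \<Rightarrow> real"
  assumes p_pos: "0 < p" and q_gt: "2 * p < q" and is_P: "is_P_ot 0 p q x"
begin

sublocale overtwist_cycle 0 p q x
  using is_P q_gt by unfold_locales (auto simp: is_P_ot_def)

lemma abs_max_pt: "abs_max_pt (x ` {1..q}) = x 1"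
  using p_pos q_gt by (intro abs_max_pt_eq) (auto simp: Pi_ot_def)

lemma abs_min_pt: "abs_min_pt (x ` {1..q}) = x (2 * p)"
  using p_pos q_gt by (intro abs_min_pt_eq) (auto simp: Pi_ot_def)

lemma in_I1:
  assumes "1 \<le> j" "j \<le> 2 * p"
  shows "1/3 \<le> x j" "x j \<le> 2/3"
proof -
  have "x 1 \<in> I1" "x (2 * p) \<in> I1"
    using is_P abs_max_pt abs_min_pt by (auto simp: is_P_ot_def Let_def)
  then show "1/3 \<le> x j" "x j \<le> 2/3"
    using points_le[of 1 j] points_le[of j "2 * p"] assms q_gt by (auto simp: I1_def)
qed

lemma beyond_I1:
  assumes j: "2 * p < j" "j \<le> q"
  shows "2/3 < x j"
proof (rule ccontr)
  assume "\<not> 2/3 < x j"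
  moreover have "x (2 * p) < x j" using points_less j p_pos by simp
  ultimately have "H2 (x j) < H2 (x (2 * p))"
    using in_I1[of "2 * p"] p_pos H2_on_I1 by simp
  also have "H2 (x (2 * p)) = x 1" using H2_eq p_pos q_gt by (simp add: Pi_ot_def)
  also have "x 1 \<le> x (j - p)" using points_le j p_pos by simp
  also have "x (j - p) = H2 (x j)" using H2_eq j by (simp add: Pi_ot_def)
  finally show False by simp
qed

end

locale P_ot_1 =
  fixes p q :: nat and y :: "nat \<Rightarrow> real"
  assumes p_pos: "0 < p" and q_gt: "2 * p < q" and is_P: "is_P_ot 1 p q y"
begin

sublocale overtwist_cycle 1 p q y
  using is_P q_gt by unfold_locales (auto simp: is_P_ot_def)

lemma abs_max_pt: "abs_max_pt (y ` {1..q}) = y 2"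
  using p_pos q_gt by (intro abs_max_pt_eq) (auto simp: Pi_ot_def)

lemma abs_min_pt: "abs_min_pt (y ` {1..q}) = y (2 * p + 1)"
  using p_pos q_gt by (intro abs_min_pt_eq) (auto simp: Pi_ot_def)

lemma second_in_I1: "1/3 \<le> y 2" "y 2 \<le> 2/3"
  using is_P abs_max_pt by (auto simp: is_P_ot_def Let_def I1_def)

lemma abs_min_pt_location: "if q = 2 * p + 1 then y (2 * p + 1) \<in> I1 else y (2 * p + 1) \<in> I2"
proof -
  have "if (1::nat) = 0 \<or> 1 = q - 2 * p then abs_min_pt (y ` {1..q}) \<in> I1 else abs_min_pt (y ` {1..q}) \<in> I2"
    using is_P unfolding is_P_ot_def Let_def by (rule conjunct2[THEN conjunct2])
  moreover have "((1::nat) = 0 \<or> 1 = q - 2 * p) \<longleftrightarrow> q = 2 * p + 1" using q_gt by arith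
  ultimately show ?thesis unfolding abs_min_pt by (cases "q = 2 * p + 1") simp_all
qed

lemma first_in_I0: "y 1 < 1/3"
proof (rule ccontr)
  assume "\<not> y 1 < 1/3"
  moreover have "y 1 < y 2" using points_less p_pos q_gt by simp
  ultimately have "H2 (y 2) < H2 (y 1)"
    using second_in_I1 H2_on_I1 by simp
  also have "H2 (y 1) = y (p + 1)" using H2_eq q_gt by (simp add: Pi_ot_def)
  also have "y (p + 1) \<le> y q" using points_le q_gt by simp
  also have "y q = H2 (y 2)" using H2_eq p_pos q_gt by (simp add: Pi_ot_def)
  finally show False by simp
qed

lemma in_I1:
  assumes j: "2 \<le> j" "j \<le> 2 * p"
  shows "1/3 \<le> y j" "y j \<le> 2/3"
proof -
  show "1/3 \<le> y j" using second_in_I1 points_le[of 2 j] j q_gt by simp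
  show "y j \<le> 2/3"
  proof (rule ccontr)
    assume "\<not> y j \<le> 2/3"
    then have right: "2/3 \<le> y (2 * p)" using points_le[of j "2 * p"] j q_gt by simp
    have "q \<noteq> 2 * p + 1"
    proof
      assume "q = 2 * p + 1"
      then have "y q \<le> 2/3" using abs_min_pt_location by (simp add: I1_def)
      then show False using \<open>\<not> y j \<le> 2/3\<close> points_le[of j q] j q_gt by simp
    qed
    then have right': "2/3 \<le> y (2 * p + 1)" using abs_min_pt_location by (simp add: I2_def)
    have "y (Pi_ot 1 p q (2 * p)) = H2 (y (2 * p))" using H2_eq p_pos q_gt by simp
    also have "\<dots> < H2 (y (2 * p + 1))"
      using H2_on_I2 right right' points_less[of "2 * p" "2 * p + 1"] p_pos q_gt by simp
    also have "\<dots> = y 1" using H2_eq q_gt by (simp add: Pi_ot_def)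
    finally have "y (Pi_ot 1 p q (2 * p)) < y 1" .
    moreover have "Pi_ot 1 p q (2 * p) \<in> {1..q}" using Pi_ot_range[of 1 p q] q_gt p_pos by simp
    then have "y 1 \<le> y (Pi_ot 1 p q (2 * p))" using points_le by simp
    ultimately show False by simp
  qed
qed

lemma last_in_I1: "q = 2 * p + 1 \<Longrightarrow> y q \<le> 2/3"
  using abs_min_pt_location by (simp add: I1_def)

lemma tail_in_I2:
  assumes "q \<noteq> 2 * p + 1" "2 * p < j" "j \<le> q"
  shows "2/3 \<le> y j"
  using abs_min_pt_location points_le[of "2 * p + 1" j] assms by (simp add: I2_def)

end

locale P_ot_pair = X: P_ot_0 p q x + Y: P_ot_1 p q y
  for p q :: nat and x y :: "nat \<Rightarrow> real"
begin

definition gap :: "nat \<Rightarrow> real" where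
  "gap i = (if i \<le> p then y (i + 1) - x i else if i = p + 1 then x (p + 1) - y 1 else x i - y i)"

lemma gap_Pi_ot_I1:
  assumes i: "1 \<le> i" "i \<le> 2 * p" "i \<noteq> p + 1"
  shows "gap (Pi_ot 0 p q i) = 3 * gap i"
proof -
  note pq = X.p_pos X.q_gt
  have x_i: "x (Pi_ot 0 p q i) = 2 - 3 * x i"
    using X.H2_eq[of i] X.in_I1[of i] H2_on_I1 i pq by simp
  show ?thesis
  proof (cases "i \<le> p")
    case True
    have "y (q + 1 - i) = 2 - 3 * y (i + 1)"
      using Y.H2_eq[of "i + 1"] Y.in_I1[of "i + 1"] H2_on_I1 True i pq by (simp add: Pi_ot_def)
    moreover have "Pi_ot 0 p q i = q + 1 - i" "\<not> q + 1 - i \<le> p" "q + 1 - i \<noteq> p + 1"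
      using True i pq by (auto simp: Pi_ot_def)
    ultimately show ?thesis using True x_i by (simp add: gap_def)
  next
    case False
    have "y (2 * p + 1 - i + 1) = 2 - 3 * y i"
      using Y.H2_eq[of i] Y.in_I1[of i] H2_on_I1 False i pq by (simp add: Pi_ot_def Suc_diff_le)
    moreover have "Pi_ot 0 p q i = 2 * p + 1 - i" "2 * p + 1 - i \<le> p"
      using False i by (auto simp: Pi_ot_def)
    ultimately show ?thesis using False i x_i by (simp add: gap_def)
  qed
qed

lemma gap_Pi_ot_I2:
  assumes i: "2 * p < i" "i \<le> q" and q: "q \<noteq> 2 * p + 1"
  shows "gap (Pi_ot 0 p q i) = 3 * gap i"
proof -
  have "2/3 \<le> x i" "2/3 \<le> y i"
    using X.beyond_I1 Y.tail_in_I2 i q by (auto intro: less_imp_le)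
  then have x_i: "x (Pi_ot 0 p q i) = 3 * x i - 2" and y_i: "y (Pi_ot 1 p q i) = 3 * y i - 2"
    using H2_on_I2[of "x i"] H2_on_I2[of "y i"] X.H2_eq Y.H2_eq i by simp_all
  show ?thesis
  proof (cases "i = 2 * p + 1")
    case True
    then show ?thesis using x_i y_i X.p_pos by (simp add: Pi_ot_def gap_def)
  next
    case False
    then have "Pi_ot 0 p q i = i - p" "Pi_ot 1 p q i = i - p" "\<not> i - p \<le> p" "i - p \<noteq> p + 1"
      using i by (auto simp: Pi_ot_def)
    then show ?thesis using x_i y_i i X.p_pos by (simp add: gap_def)
  qed
qed

lemma gap_Pi_ot:
  assumes "1 \<le> i" "i \<le> q" "i \<noteq> p + 1" "\<not> (i = q \<and> q = 2 * p + 1)"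
  shows "gap (Pi_ot 0 p q i) = 3 * gap i"
proof (cases "i \<le> 2 * p")
  case True
  then show ?thesis using gap_Pi_ot_I1 assms by simp
next
  case False
  then have "q \<noteq> 2 * p + 1" using assms by auto
  then show ?thesis using gap_Pi_ot_I2 False assms by simp
qed

lemma gap_p1_pos: "0 < gap (p + 1)"
  using X.in_I1[of "p + 1"] Y.first_in_I0 X.p_pos by (simp add: gap_def)

lemma gap_last_pos: "q = 2 * p + 1 \<Longrightarrow> 0 < gap q"
  using X.beyond_I1[of q] Y.last_in_I1 X.p_pos by (simp add: gap_def)

lemma first_points_less:
  assumes "coprime p q"
  shows "x 1 < y 2"
proof (rule ccontr)
  assume "\<not> x 1 < y 2"
  then have "gap 1 \<le> 0" using X.p_pos by (simp add: gap_def numeral_2_eq_2)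
  have "gap (p + 1) \<le> 0"
  proof (rule Pi_ot_0_invariant_all[where P = "\<lambda>i. gap i \<le> 0" and i = 1, OF assms])
    fix j assume "j \<in> {1..q}" "gap j \<le> 0"
    moreover from this have "j \<noteq> p + 1" "\<not> (j = q \<and> q = 2 * p + 1)"
      using gap_p1_pos gap_last_pos by auto
    ultimately show "gap (Pi_ot 0 p q j) \<le> 0" using gap_Pi_ot by simp
  qed (use \<open>gap 1 \<le> 0\<close> X.q_gt in auto)
  then show False using gap_p1_pos by simp
qed

end

theorem mainTheorem13:
  fixes p q :: nat and x0 x1 :: "nat \<Rightarrow> real"
  assumes "0 < p" "coprime p q" "2 * p < q"
    and "is_P_ot 0 p q x0" and "is_P_ot 1 p q x1"
  shows "H2 (abs_max_pt (x0 ` {1..q})) > H2 (abs_max_pt (x1 ` {1..q})) \<and>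
         H2 (abs_min_pt (x0 ` {1..q})) > H2 (abs_min_pt (x1 ` {1..q}))"
proof -
  interpret P_ot_pair p q x0 x1
    using assms by unfold_locales auto
  have "x0 1 < x1 2" using first_points_less assms(2) .
  then have "H2 (x1 2) < H2 (x0 1)"
    using H2_on_I1 X.in_I1[of 1] Y.second_in_I1 assms(1) by simp
  moreover have "H2 (x1 (2 * p + 1)) < H2 (x0 (2 * p))"
  proof -
    have "H2 (x1 (2 * p + 1)) = x1 1" using Y.H2_eq assms by (simp add: Pi_ot_def)
    also have "\<dots> < 1/3" by (rule Y.first_in_I0)
    also have "\<dots> \<le> x0 1" using X.in_I1[of 1] assms(1) by simp
    also have "x0 1 = H2 (x0 (2 * p))" using X.H2_eq assms by (simp add: Pi_ot_def)
    finally show ?thesis .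
  qed
  ultimately show ?thesis using X.abs_max_pt X.abs_min_pt Y.abs_max_pt Y.abs_min_pt by simp
qed

end
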